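(* Let $n\ge2$, $m\ge2$, and let $M$ be a nonderogatory $m\times m$ matrix with minimal polynomial $\mathbf p(X)=X^m$. Let $k_+,k_-$ be integers with $1\le k_+,k_-\le m-1$ and $k_++k_-=m$. Then the algebra $\mathfrak B(X^{k_+},X^{k_-},\mathbf 1)$ is not a pseudocirculant algebra, i.e. there are no $A,B\in\mathcal P(M)$ with $\ker A\cap\ker B=\{0\}$ such that $\mathfrak B(X^{k_+},X^{k_-},\mathbf 1)=\mathcal F^{\mathcal P(M)}_{A,B}$.
   Context: $\mathcal P(M)$ is the algebra of polynomials in $M$. $\mathfrak B(\mathbf p_+,\mathbf p_-,\boldsymbol\chi)$ (for $\mathbf p_+\mathbf p_-\mid\mathbf p$, $\boldsymbol\chi$ coprime to $\mathbf p$, $\mathbf q=\mathbf p/(\mathbf p_+\mathbf p_-)$) is the set of $n\times n$ block Toeplitz matrices $A=(A_{i-j})_{i,j=0}^{n-1}$ with all $A_i\in\mathcal P(M)$ such that for each $i=1,\dots,n-1$ there are polynomials $\mathbf a_i,\mathbf a_{i-n}$ with $A_i=\mathbf p_+(M)\mathbf a_i(M)$, $A_{i-n}=\mathbf p_-(M)\mathbf a_{i-n}(M)$ and $\mathbf q\mid\mathbf a_i-\boldsymbol\chi\mathbf a_{i-n}$; here $\mathbf 1$ is the constant polynomial $1$. For $A,B\in\mathcal P(M)$, $\mathcal F^{\mathcal P(M)}_{A,B}$ is the set of $n\times n$ block Toeplitz matrices $(T_{p-q})_{p,q=0}^{n-1}$ with all $T_j\in\mathcal P(M)$ and $AT_j=BT_{j-n}$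 for $j=1,\dots,n-1$; it is called a pseudocirculant algebra when $\ker A\cap\ker B=\{0\}$. *)

theory Defs
  imports "HOL-Analysis.Analysis" "HOL-Computational_Algebra.Polynomial"
begin

text \<open>Square complex matrices of size m = CARD('m) are modelled as complex^'m^'m.\<close>

primrec matpow :: "complex^'m^'m \<Rightarrow> nat \<Rightarrow> complex^'m^'m" where
  "matpow M 0 = mat 1"
| "matpow M (Suc k) = M ** matpow M k"

definition poly_mat :: "complex poly \<Rightarrow> complex^'m^'m \<Rightarrow> complex^'m^'m" where
  "poly_mat p M = (\<Sum>i\<le>degree p. mat (coeff p i) ** matpow M i)"

definition polys_in :: "complex^'m^'m \<Rightarrow> (complex^'m^'m) set" where
  "polys_in M = {poly_mat a M | a. True}"

definition mat_ker :: "complex^'m^'m \<Rightarrow> (complex^'m) set" where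
  "mat_ker A = {x. A *v x = 0}"

definition charpoly :: "complex^'m^'m \<Rightarrow> complex poly" where
  "charpoly M = det (\<chi> i j. (if i = j then [:0, 1:] else 0) - [:M $ i $ j:])"

definition is_minimal_poly :: "complex^'m^'m \<Rightarrow> complex poly \<Rightarrow> bool" where
  "is_minimal_poly M p \<longleftrightarrow> lead_coeff p = 1 \<and> poly_mat p M = 0 \<and>
     (\<forall>q. q \<noteq> 0 \<and> poly_mat q M = 0 \<longrightarrow> degree p \<le> degree q)"

definition nonderogatory :: "complex^'m^'m \<Rightarrow> bool" where
  "nonderogatory M \<longleftrightarrow> is_minimal_poly M (charpoly M)"

text \<open>The n x n block Toeplitz matrix (T_{i-j}) with blocks T_k, k = -(n-1)..n-1,
  represented as a function of the block indices (0 outside the range 0..n-1).\<close>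
definition block_toeplitz :: "nat \<Rightarrow> (int \<Rightarrow> complex^'m^'m) \<Rightarrow> nat \<Rightarrow> nat \<Rightarrow> complex^'m^'m" where
  "block_toeplitz n T = (\<lambda>i j. if i < n \<and> j < n then T (int i - int j) else 0)"

definition frakB :: "nat \<Rightarrow> complex^'m^'m \<Rightarrow> complex poly \<Rightarrow> complex poly \<Rightarrow> complex poly
    \<Rightarrow> complex poly \<Rightarrow> (nat \<Rightarrow> nat \<Rightarrow> complex^'m^'m) set" where
  "frakB n M p pp pm chi =
    {block_toeplitz n T | T.
       (\<forall>k\<in>{-(int n - 1)..int n - 1}. T k \<in> polys_in M) \<and>
       (\<forall>i\<in>{1..int n - 1}. \<exists>ai ain.
          T i = poly_mat pp M ** poly_mat ai M \<and>
          T (i - int n) = poly_mat pm M ** poly_mat ain M \<and>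
          (p div (pp * pm)) dvd (ai - chi * ain))}"

definition frakF :: "nat \<Rightarrow> complex^'m^'m \<Rightarrow> complex^'m^'m \<Rightarrow> complex^'m^'m
    \<Rightarrow> (nat \<Rightarrow> nat \<Rightarrow> complex^'m^'m) set" where
  "frakF n M A B =
    {block_toeplitz n T | T.
       (\<forall>k\<in>{-(int n - 1)..int n - 1}. T k \<in> polys_in M) \<and>
       (\<forall>j\<in>{1..int n - 1}. A ** T j = B ** T (j - int n))}"

end

theory Submission
  imports Defs
begin

text \<open>Testing the identity B = F against the two block Toeplitz matrices whose only nonzero
  block is M^k+ in position 1, resp. M^k- in position 1 - n, forces A M^k+ = 0 and B M^k- = 0.
  Since M is nilpotent of index m = k+ + k-, the nonzero vector M^(m-1) w then lies in the
  kernels of both A and B.\<close>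

lemma matpow_add: "matpow M (a + b) = matpow M a ** matpow M b"
  by (induction a) (simp_all add: matrix_mul_assoc)

lemma poly_mat_0 [simp]: "poly_mat 0 M = 0"
  by (simp add: poly_mat_def mat_0)

lemma poly_mat_1 [simp]: "poly_mat 1 M = mat 1"
  by (simp add: poly_mat_def)

lemma poly_mat_monom_1: "poly_mat (monom 1 k) M = matpow M k"
proof -
  have "poly_mat (monom 1 k) M = (\<Sum>i\<le>k. if i = k then matpow M k else 0)"
    unfolding poly_mat_def degree_monom_eq[OF one_neq_zero]
    by (intro sum.cong) (auto simp: coeff_monom mat_0)
  then show ?thesis by simp
qed

lemma poly_mat_X_power: "poly_mat ([:0, 1:] ^ k) M = matpow M k"
proof -
  have "[:0, 1:] ^ k = (monom 1 k :: complex poly)" by (simp add: monom_altdef)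
  then show ?thesis by (simp add: poly_mat_monom_1)
qed

lemma poly_mat_in_polys_in: "poly_mat a M \<in> polys_in M"
  unfolding polys_in_def by blast

lemma zero_in_polys_in: "0 \<in> polys_in M"
  using poly_mat_in_polys_in[of 0 M] by simp

lemma block_toeplitz_eqD:
  assumes "block_toeplitz n T = block_toeplitz n T'" and "k \<in> {-(int n - 1)..int n - 1}"
  shows "T k = T' k"
proof (cases "k \<ge> 0")
  case True
  with assms(2) have "nat k < n" by auto
  with True show ?thesis
    using fun_cong[OF fun_cong[OF assms(1), of "nat k"], of 0] by (simp add: block_toeplitz_def)
next
  case False
  with assms(2) have "nat (-k) < n" by auto
  with False show ?thesis
    using fun_cong[OF fun_cong[OF assms(1), of 0], of "nat (-k)"] by (simp add: block_toeplitz_def)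
qed

lemma frakF_corner_blocks:
  assumes "block_toeplitz n T \<in> frakF n M A B" and "n \<ge> 2"
  shows "A ** T 1 = B ** T (1 - int n)"
proof -
  obtain T' where T': "block_toeplitz n T = block_toeplitz n T'"
    and rel: "\<forall>j\<in>{1..int n - 1}. A ** T' j = B ** T' (j - int n)"
    using assms(1) unfolding frakF_def by blast
  have range: "1 \<in> {-(int n - 1)..int n - 1}" "1 - int n \<in> {-(int n - 1)..int n - 1}"
    using assms(2) by auto
  show ?thesis
    using rel assms(2) block_toeplitz_eqD[OF T' range(1)] block_toeplitz_eqD[OF T' range(2)]
    by auto
qed

text \<open>When p = p+ p-, the compatibility polynomial q = p / (p+ p-) is 1 and imposes nothing.\<close>

lemma frakB_upper_corner:
  assumes "p = pp * pm" and "p \<noteq> 0"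
  shows "block_toeplitz n (\<lambda>k. if k = 1 then poly_mat pp M else 0) \<in> frakB n M p pp pm chi"
proof -
  have "p div (pp * pm) = 1" using assms by simp
  then have "\<exists>ai ain. (if i = 1 then poly_mat pp M else 0) = poly_mat pp M ** poly_mat ai M \<and>
      (if i - int n = 1 then poly_mat pp M else 0) = poly_mat pm M ** poly_mat ain M \<and>
      p div (pp * pm) dvd ai - chi * ain"
    if "i \<in> {1..int n - 1}" for i
    using that by (intro exI[of _ "if i = 1 then 1 else 0"] exI[of _ 0]) auto
  then show ?thesis
    unfolding frakB_def by (auto simp: poly_mat_in_polys_in zero_in_polys_in)
qed

lemma frakB_lower_corner:
  assumes "p = pp * pm" and "p \<noteq> 0"
  shows "block_toeplitz n (\<lambda>k. if k = 1 - int n then poly_mat pm M else 0) \<in> frakB n M p pp pm chi"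
proof -
  have "p div (pp * pm) = 1" using assms by simp
  then have "\<exists>ai ain. (if i = 1 - int n then poly_mat pm M else 0) = poly_mat pp M ** poly_mat ai M \<and>
      (if i - int n = 1 - int n then poly_mat pm M else 0) = poly_mat pm M ** poly_mat ain M \<and>
      p div (pp * pm) dvd ai - chi * ain"
    if "i \<in> {1..int n - 1}" for i
    using that by (intro exI[of _ 0] exI[of _ "if i = 1 then 1 else 0"]) auto
  then show ?thesis
    unfolding frakB_def by (auto simp: poly_mat_in_polys_in zero_in_polys_in)
qed

lemma frakB_eq_frakF_annihilates:
  assumes "frakB n M p pp pm chi = frakF n M A B"
    and "n \<ge> 2" and "p = pp * pm" and "p \<noteq> 0"
  shows "A ** poly_mat pp M = 0" and "B ** poly_mat pm M = 0"
proof -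
  show "A ** poly_mat pp M = 0"
    using frakF_corner_blocks[OF frakB_upper_corner[OF assms(3,4), of n M chi, unfolded assms(1)]]
      assms(2) by simp
  show "B ** poly_mat pm M = 0"
    using frakF_corner_blocks[OF frakB_lower_corner[OF assms(3,4), of n M chi, unfolded assms(1)]]
      assms(2) by simp
qed

lemma matpow_pred_nonzero:
  assumes "is_minimal_poly M ([:0, 1:] ^ m)" and "m \<ge> 1"
  shows "matpow M (m - 1) \<noteq> 0"
proof
  assume "matpow M (m - 1) = 0"
  then have "degree ([:0, 1:] ^ m :: complex poly) \<le> degree ([:0, 1:] ^ (m - 1) :: complex poly)"
    using assms(1) unfolding is_minimal_poly_def by (simp add: poly_mat_X_power)
  with assms(2) show False by (simp add: degree_power_eq)
qed

lemma common_kernel_of_annihilators: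
  assumes "A ** matpow M kp = 0" and "B ** matpow M km = 0"
    and "1 \<le> kp" and "1 \<le> km" and "matpow M (kp + km - 1) \<noteq> 0"
  shows "mat_ker A \<inter> mat_ker B \<noteq> {0}"
proof -
  obtain w where w: "matpow M (kp + km - 1) *v w \<noteq> 0"
    using assms(5) matrix_eq[of "matpow M (kp + km - 1)" 0] by auto
  have "kp + km - 1 = kp + (km - 1)" using assms(3,4) by simp
  then have "A *v (matpow M (kp + km - 1) *v w) = (A ** matpow M kp) *v (matpow M (km - 1) *v w)"
    by (simp only: matpow_add matrix_vector_mul_assoc matrix_mul_assoc)
  moreover have "kp + km - 1 = km + (kp - 1)" using assms(3,4) by simp
  then have "B *v (matpow M (kp + km - 1) *v w) = (B ** matpow M km) *v (matpow M (kp - 1) *v w)"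
    by (simp only: matpow_add matrix_vector_mul_assoc matrix_mul_assoc)
  ultimately have "A *v (matpow M (kp + km - 1) *v w) = 0" "B *v (matpow M (kp + km - 1) *v w) = 0"
    using assms(1,2) by simp_all
  with w show ?thesis by (auto simp: mat_ker_def)
qed

theorem mainTheorem15:
  fixes M :: "complex^'m^'m" and n kp km :: nat
  assumes "n \<ge> 2" and "CARD('m) \<ge> 2"
    and "nonderogatory M"
    and "is_minimal_poly M ([:0, 1:] ^ CARD('m))"
    and "1 \<le> kp" and "kp \<le> CARD('m) - 1"
    and "1 \<le> km" and "km \<le> CARD('m) - 1"
    and "kp + km = CARD('m)"
  shows "\<not> (\<exists>A B. A \<in> polys_in M \<and> B \<in> polys_in M \<and> mat_ker A \<inter> mat_ker B = {0} \<and>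
            frakB n M ([:0, 1:] ^ CARD('m)) ([:0, 1:] ^ kp) ([:0, 1:] ^ km) 1 = frakF n M A B)"
proof clarify
  fix A B
  assume ker: "mat_ker A \<inter> mat_ker B = {0}"
    and eq: "frakB n M ([:0, 1:] ^ CARD('m)) ([:0, 1:] ^ kp) ([:0, 1:] ^ km) 1 = frakF n M A B"
  have factor: "([:0, 1:] :: complex poly) ^ CARD('m) = [:0, 1:] ^ kp * [:0, 1:] ^ km"
    by (simp add: assms(9)[symmetric] power_add)
  have "A ** matpow M kp = 0" and "B ** matpow M km = 0"
    using frakB_eq_frakF_annihilates[OF eq assms(1) factor] by (simp_all add: poly_mat_X_power)
  moreover have "matpow M (kp + km - 1) \<noteq> 0"
    using matpow_pred_nonzero[OF assms(4)] assms(2,9) by simp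
  ultimately show False
    using common_kernel_of_annihilators assms(5,7) ker by blast
qed

end
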